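(* Suppose Assumptions (A1), (A2) and (SC) hold. Then for every $x\in\mathcal{X}$ and $t>0$, $$\|y_t^*(x)-y^*(x)\|\le\sqrt{\frac{2}{\mu_g}kt}.$$
   Context: Let $f,g,h_1,\dots,h_k:\mathbb{R}^n\times\mathbb{R}^m\to\mathbb{R}$ and $\mathcal{X}\subseteq\mathbb{R}^n$. For $x\in\mathcal{X}$ let $\mathcal{Y}(x)=\{y: h_i(x,y)\le 0,\ i=1,\dots,k\}$ and $y^*(x)=\arg\min_{y\in\mathcal{Y}(x)} g(x,y)$. For $t>0$ let $\widetilde g_t(x,y)=g(x,y)-t\sum_{i=1}^k\log(-h_i(x,y))$ (defined when all $h_i(x,y)<0$) and $y_t^*(x)=\arg\min_y\widetilde g_t(x,y)$. Assumptions: (A1) $f$ once and $g,h_i$ twice continuously differentiable; (A2) $\mathcal{X}$ convex and compact and for every $x\in\mathcal{X}$ there is $y$ with $h_i(x,y)<0$ for all $i$; (SC) for every $x\in\mathcal{X}$, $g(x,\cdot)$ is $\mu_g$-strongly convex and each $h_i(x,\cdot)$ is convex. *)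

theory Defs
  imports "HOL-Analysis.Analysis"
begin

definition C1_fun :: "('a::euclidean_space \<Rightarrow> 'b::real_normed_vector) \<Rightarrow> bool" where
  "C1_fun f \<longleftrightarrow> (\<exists>D :: 'a \<Rightarrow> ('a \<Rightarrow>\<^sub>L 'b).
      (\<forall>z. (f has_derivative blinfun_apply (D z)) (at z)) \<and> continuous_on UNIV D)"

definition C2_fun :: "('a::euclidean_space \<Rightarrow> 'b::real_normed_vector) \<Rightarrow> bool" where
  "C2_fun f \<longleftrightarrow> (\<exists>D :: 'a \<Rightarrow> ('a \<Rightarrow>\<^sub>L 'b).
      (\<forall>z. (f has_derivative blinfun_apply (D z)) (at z)) \<and> C1_fun D)"

definition strongly_convex :: "real \<Rightarrow> ('a::real_normed_vector \<Rightarrow> real) \<Rightarrow> bool" where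
  "strongly_convex mu f \<longleftrightarrow> mu > 0 \<and>
     (\<forall>y z a. 0 \<le> a \<and> a \<le> 1 \<longrightarrow>
        f (a *\<^sub>R y + (1 - a) *\<^sub>R z)
          \<le> a * f y + (1 - a) * f z - mu / 2 * a * (1 - a) * (norm (y - z))\<^sup>2)"

definition barrier ::
  "('x \<times> 'y \<Rightarrow> real) \<Rightarrow> (nat \<Rightarrow> 'x \<times> 'y \<Rightarrow> real) \<Rightarrow> nat \<Rightarrow> real \<Rightarrow> 'x \<Rightarrow> 'y \<Rightarrow> real" where
  "barrier g h k t x y = g (x, y) - t * (\<Sum>i<k. ln (- h i (x, y)))"

end

theory Submission
  imports Defs
begin

text \<open>Write \<open>G = g(x,\<cdot>)\<close>, \<open>F\<close> for the feasible set and \<open>d = \<parallel>y\<^sub>t - y\<^sup>*\<parallel>\<close>.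
  Since \<open>y\<^sup>*\<close> minimises the \<open>\<mu>\<close>-strongly convex \<open>G\<close> over the convex set \<open>F\<close>, which contains
  \<open>y\<^sub>t\<close>, the segment from \<open>y\<^sup>*\<close> to \<open>y\<^sub>t\<close> gives the quadratic growth \<open>\<mu>/2 d\<^sup>2 \<le> G y\<^sub>t - G y\<^sup>*\<close>.
  Conversely, moving from \<open>y\<^sub>t\<close> towards \<open>y\<^sup>*\<close> by a fraction \<open>1 - z\<close> shrinks every slack
  \<open>-h\<^sub>i\<close> by at most the factor \<open>z\<close>, so barrier minimality of \<open>y\<^sub>t\<close> and convexity of \<open>G\<close> give
  \<open>(1 - z) (G y\<^sub>t - G y\<^sup>*) \<le> - k t ln z \<le> k t (1 - z) / z\<close>; letting \<open>z \<rightarrow> 1\<close> yields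
  \<open>G y\<^sub>t - G y\<^sup>* \<le> k t\<close>.\<close>

lemma strongly_convexD:
  assumes "strongly_convex mu f" and "0 \<le> a" and "a \<le> 1"
  shows "f ((1 - a) *\<^sub>R y + a *\<^sub>R z)
    \<le> (1 - a) * f y + a * f z - mu / 2 * a * (1 - a) * (norm (y - z))\<^sup>2"
proof -
  have sc: "\<forall>b. 0 \<le> b \<and> b \<le> 1 \<longrightarrow> f (b *\<^sub>R y + (1 - b) *\<^sub>R z)
    \<le> b * f y + (1 - b) * f z - mu / 2 * b * (1 - b) * (norm (y - z))\<^sup>2"
    using assms(1) unfolding strongly_convex_def by blast
  have "f ((1 - a) *\<^sub>R y + (1 - (1 - a)) *\<^sub>R z)
    \<le> (1 - a) * f y + (1 - (1 - a)) * f z - mu / 2 * (1 - a) * (1 - (1 - a)) * (norm (y - z))\<^sup>2"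
    using spec[OF sc, of "1 - a"] assms(2,3) by simp
  then show ?thesis
    by (simp add: algebra_simps)
qed

lemma strongly_convex_pos: "strongly_convex mu f \<Longrightarrow> 0 < mu"
  unfolding strongly_convex_def by simp

lemma strongly_convex_imp_convex_on:
  assumes "strongly_convex mu f"
  shows "convex_on UNIV f"
proof
  fix a :: real and y z :: 'a
  assume a: "0 < a" "a < 1"
  have "0 \<le> mu / 2 * a * (1 - a) * (norm (y - z))\<^sup>2"
    using strongly_convex_pos[OF assms] a by simp
  then show "f ((1 - a) *\<^sub>R y + a *\<^sub>R z) \<le> (1 - a) * f y + a * f z"
    using strongly_convexD[OF assms, of a y z] a by simp
qed simp

lemma convex_common_sublevel_set:
  fixes c :: "'i \<Rightarrow> 'a::real_vector \<Rightarrow> real"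
  assumes "\<And>i. i \<in> I \<Longrightarrow> convex_on UNIV (c i)"
  shows "convex {y. \<forall>i\<in>I. c i y \<le> 0}"
proof (rule convexI, safe)
  fix y z :: 'a and u v :: real and i
  assume y: "\<forall>i\<in>I. c i y \<le> 0" and z: "\<forall>i\<in>I. c i z \<le> 0"
    and uv: "0 \<le> u" "0 \<le> v" "u + v = 1" and i: "i \<in> I"
  have "c i (u *\<^sub>R y + v *\<^sub>R z) \<le> max (c i y) (c i z)"
    using convex_lower[OF assms[OF i] _ _ uv] by simp
  also have "\<dots> \<le> 0"
    using y z i by simp
  finally show "c i (u *\<^sub>R y + v *\<^sub>R z) \<le> 0" .
qed

lemma strongly_convex_quadratic_growth:
  fixes G :: "'a::real_normed_vector \<Rightarrow> real"
  assumes G: "strongly_convex mu G" and F: "convex F"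
    and ystar: "ystar \<in> F" and ystar_min: "\<And>y. y \<in> F \<Longrightarrow> G ystar \<le> G y"
    and y: "y \<in> F"
  shows "mu / 2 * (norm (y - ystar))\<^sup>2 \<le> G y - G ystar"
proof (rule field_le_mult_one_interval)
  fix z :: real
  assume z: "0 < z" "z < 1"
  have "G ystar \<le> G ((1 - z) *\<^sub>R y + z *\<^sub>R ystar)"
    using ystar_min convexD[OF F y ystar, of "1 - z" z] z by simp
  also have "\<dots> \<le> (1 - z) * G y + z * G ystar - mu / 2 * z * (1 - z) * (norm (y - ystar))\<^sup>2"
    using strongly_convexD[OF G] z by simp
  finally have "(1 - z) * (z * (mu / 2 * (norm (y - ystar))\<^sup>2)) \<le> (1 - z) * (G y - G ystar)"
    by (simp add: algebra_simps)
  then show "z * (mu / 2 * (norm (y - ystar))\<^sup>2) \<le> G y - G ystar"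
    using z by simp
qed

lemma mult_minus_ln_le_one_minus:
  fixes z :: real
  assumes "0 < z"
  shows "z * - ln z \<le> 1 - z"
proof -
  have "- ln z \<le> inverse z - 1"
    using ln_le_minus_one[of "inverse z"] assms by (simp add: ln_inverse)
  then have "z * - ln z \<le> z * (inverse z - 1)"
    by (rule mult_left_mono) (use assms in simp)
  also have "\<dots> = 1 - z"
    using assms by (simp add: right_diff_distrib)
  finally show ?thesis .
qed

lemma log_barrier_slack_interpolation:
  fixes c :: "'a::real_vector \<Rightarrow> real"
  assumes c: "convex_on UNIV c" and y: "c y \<le> 0" and yt: "c yt < 0"
    and z: "0 < z" "z < 1"
  shows "0 < - c ((1 - z) *\<^sub>R y + z *\<^sub>R yt)"
    and "ln z + ln (- c yt) \<le> ln (- c ((1 - z) *\<^sub>R y + z *\<^sub>R yt))"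
proof -
  have "(1 - z) * c y \<le> 0"
    using z y by (simp add: mult_nonneg_nonpos)
  then have "z * - c yt \<le> - c ((1 - z) *\<^sub>R y + z *\<^sub>R yt)"
    using convex_onD[OF c, of z y yt] z by simp
  moreover have "0 < z * - c yt"
    using z yt by (simp add: mult_pos_neg)
  ultimately show "0 < - c ((1 - z) *\<^sub>R y + z *\<^sub>R yt)"
    and "ln z + ln (- c yt) \<le> ln (- c ((1 - z) *\<^sub>R y + z *\<^sub>R yt))"
    using z yt by (simp_all add: ln_mult_pos[symmetric])
qed

lemma log_barrier_minimizer_suboptimality:
  fixes G :: "'a::real_vector \<Rightarrow> real" and c :: "'i \<Rightarrow> 'a \<Rightarrow> real"
  assumes G: "convex_on UNIV G"
    and c: "\<And>i. i \<in> I \<Longrightarrow> convex_on UNIV (c i)" and t: "0 \<le> t"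
    and y_feas: "\<forall>i\<in>I. c i y \<le> 0" and yt_feas: "\<forall>i\<in>I. c i yt < 0"
    and yt_min: "\<And>w. \<forall>i\<in>I. c i w < 0 \<Longrightarrow>
      G yt - t * (\<Sum>i\<in>I. ln (- c i yt)) \<le> G w - t * (\<Sum>i\<in>I. ln (- c i w))"
  shows "G yt - G y \<le> real (card I) * t"
proof (rule field_le_mult_one_interval)
  fix z :: real
  assume z: "0 < z" "z < 1"
  define w where "w = (1 - z) *\<^sub>R y + z *\<^sub>R yt"
  have slack: "0 < - c i w" "ln z + ln (- c i yt) \<le> ln (- c i w)" if "i \<in> I" for i
    unfolding w_def using log_barrier_slack_interpolation[OF c[OF that] _ _ z] y_feas yt_feas that
    by auto
  have "real (card I) * ln z + (\<Sum>i\<in>I. ln (- c i yt)) \<le> (\<Sum>i\<in>I. ln (- c i w))"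
    using sum_mono[of I "\<lambda>i. ln z + ln (- c i yt)", OF slack(2)] by (simp add: sum.distrib)
  then have "t * (real (card I) * ln z + (\<Sum>i\<in>I. ln (- c i yt))) \<le> t * (\<Sum>i\<in>I. ln (- c i w))"
    using t by (rule mult_left_mono)
  moreover have "G yt - t * (\<Sum>i\<in>I. ln (- c i yt)) \<le> G w - t * (\<Sum>i\<in>I. ln (- c i w))"
    using yt_min slack(1) by force
  moreover have "G w \<le> (1 - z) * G y + z * G yt"
    unfolding w_def using convex_onD[OF G, of z y yt] z by simp
  ultimately have "(1 - z) * (G yt - G y) \<le> real (card I) * t * - ln z"
    by (simp add: algebra_simps)
  then have "z * ((1 - z) * (G yt - G y)) \<le> z * (real (card I) * t * - ln z)"
    by (rule mult_left_mono) (use z in simp)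
  also have "\<dots> = real (card I) * t * (z * - ln z)"
    by (simp add: algebra_simps)
  also have "\<dots> \<le> real (card I) * t * (1 - z)"
    using mult_left_mono[OF mult_minus_ln_le_one_minus[OF z(1)], of "real (card I) * t"] t by simp
  finally have "(1 - z) * (z * (G yt - G y)) \<le> (1 - z) * (real (card I) * t)"
    by (simp add: algebra_simps)
  then show "z * (G yt - G y) \<le> real (card I) * t"
    using z by simp
qed

theorem lemma6:
  fixes f g :: "(real^'a) \<times> (real^'b) \<Rightarrow> real"
    and h :: "nat \<Rightarrow> (real^'a) \<times> (real^'b) \<Rightarrow> real"
    and k :: nat
    and X :: "(real^'a) set"
    and mu_g t :: real
    and x :: "real^'a"
    and ystar yt :: "real^'b"
  assumes A1_f: "C1_fun f"
    and A1_g: "C2_fun g"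
    and A1_h: "\<And>i. i < k \<Longrightarrow> C2_fun (h i)"
    and A2_convex: "convex X"
    and A2_compact: "compact X"
    and A2_slater: "\<And>x'. x' \<in> X \<Longrightarrow> \<exists>y. \<forall>i<k. h i (x', y) < 0"
    and SC_g: "\<And>x'. x' \<in> X \<Longrightarrow> strongly_convex mu_g (\<lambda>y. g (x', y))"
    and SC_h: "\<And>x' i. x' \<in> X \<Longrightarrow> i < k \<Longrightarrow> convex_on UNIV (\<lambda>y. h i (x', y))"
    and x_in: "x \<in> X"
    and t_pos: "t > 0"
    and ystar_feas: "\<forall>i<k. h i (x, ystar) \<le> 0"
    and ystar_min: "\<And>y. (\<forall>i<k. h i (x, y) \<le> 0) \<Longrightarrow> g (x, ystar) \<le> g (x, y)"
    and yt_feas: "\<forall>i<k. h i (x, yt) < 0"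
    and yt_min: "\<And>y. (\<forall>i<k. h i (x, y) < 0) \<Longrightarrow> barrier g h k t x yt \<le> barrier g h k t x y"
  shows "norm (yt - ystar) \<le> sqrt (2 / mu_g * real k * t)"
proof -
  let ?G = "\<lambda>y. g (x, y)" and ?c = "\<lambda>i y. h i (x, y)"
  have G: "strongly_convex mu_g ?G" and c: "\<And>i. i \<in> {..<k} \<Longrightarrow> convex_on UNIV (?c i)"
    using SC_g SC_h x_in by auto
  have F: "convex {y. \<forall>i\<in>{..<k}. ?c i y \<le> 0}"
    using convex_common_sublevel_set[of "{..<k}" ?c, OF c] .
  have "mu_g / 2 * (norm (yt - ystar))\<^sup>2 \<le> ?G yt - ?G ystar"
    using strongly_convex_quadratic_growth[OF G F, of ystar yt] ystar_feas ystar_min yt_feas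
    by (simp add: less_imp_le)
  also have "\<dots> \<le> real (card {..<k}) * t"
    by (rule log_barrier_minimizer_suboptimality[OF strongly_convex_imp_convex_on[OF G] c])
      (use t_pos ystar_feas yt_feas yt_min in \<open>auto simp: barrier_def\<close>)
  finally have "(norm (yt - ystar))\<^sup>2 \<le> 2 / mu_g * real k * t"
    using strongly_convex_pos[OF G] by (simp add: field_simps)
  then show ?thesis
    by (rule real_le_rsqrt)
qed

end
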